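(* Let $4.999\le r\le 5$, $1\le\theta\le 2.2$, and $\delta\in\mathbb{R}$. Define $u_0=u_1=1$, $u_2=\theta+\delta$, and $u_n=(r-\theta)u_{n-1}-(r-2\theta)u_{n-2}-\theta u_{n-3}$ for $n\ge 3$. Let $q(x)=1-(r-\theta)x+(r-2\theta)x^2+\theta x^3$, and suppose the roots $\alpha,\beta,\gamma$ of $q$ are real with $\alpha<-1<0<\gamma<\beta<1$. If $\theta+\delta<\frac{1}{1-\gamma}$, then $u_{n+1}-u_n\to-\infty$ as $n\to\infty$. *)

theory Defs
  imports "HOL-Analysis.Analysis"
begin

fun useq :: "real \<Rightarrow> real \<Rightarrow> real \<Rightarrow> nat \<Rightarrow> real" where
  "useq r \<theta> \<delta> 0 = 1"
| "useq r \<theta> \<delta> (Suc 0) = 1"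
| "useq r \<theta> \<delta> (Suc (Suc 0)) = \<theta> + \<delta>"
| "useq r \<theta> \<delta> (Suc (Suc (Suc n))) =
     (r - \<theta>) * useq r \<theta> \<delta> (Suc (Suc n)) - (r - 2*\<theta>) * useq r \<theta> \<delta> (Suc n)
     - \<theta> * useq r \<theta> \<delta> n"

definition qpoly :: "real \<Rightarrow> real \<Rightarrow> real \<Rightarrow> real" where
  "qpoly r \<theta> x = 1 - (r - \<theta>) * x + (r - 2*\<theta>) * x^2 + \<theta> * x^3"

end

theory Submission
  imports Defs
begin

text \<open>
  The differences \<open>d n = u (n+1) - u n\<close> satisfy the same third-order recurrence as \<open>u\<close>, whose
  characteristic polynomial \<open>x\<^sup>3 - (r-\<theta>)x\<^sup>2 + (r-2\<theta>)x + \<theta>\<close> is the reciprocal of \<open>q\<close>.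
  Its roots \<open>1/\<gamma> > 1/\<beta> > 1 > 0 > 1/\<alpha> > -1\<close> are distinct, so
  \<open>d n = a \<gamma>\<^sup>-\<^sup>n + b \<beta>\<^sup>-\<^sup>n + c \<alpha>\<^sup>-\<^sup>n\<close>, and the dominant term wins as soon as \<open>a < 0\<close>.
  Computing \<open>a\<close> from \<open>d 0, d 1, d 2\<close> with Vieta's formula shows that \<open>a < 0\<close> is exactly the
  hypothesis \<open>\<theta> + \<delta> < 1/(1-\<gamma>)\<close>.
\<close>

definition lin_rec3 :: "'a::comm_ring_1 \<Rightarrow> 'a \<Rightarrow> 'a \<Rightarrow> (nat \<Rightarrow> 'a) \<Rightarrow> bool" where
  "lin_rec3 c2 c1 c0 f \<longleftrightarrow>
     (\<forall>n. f (Suc (Suc (Suc n))) = c2 * f (Suc (Suc n)) + c1 * f (Suc n) + c0 * f n)"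

lemma lin_rec3_unique:
  assumes "lin_rec3 c2 c1 c0 f" "lin_rec3 c2 c1 c0 g"
    and "f 0 = g 0" "f 1 = g 1" "f 2 = g 2"
  shows "f = g"
proof -
  have "f n = g n \<and> f (Suc n) = g (Suc n) \<and> f (Suc (Suc n)) = g (Suc (Suc n))" for n
  proof (induction n)
    case 0
    then show ?case using assms(3-5) by (simp add: numeral_2_eq_2)
  next
    case (Suc n)
    then show ?case using assms(1,2) unfolding lin_rec3_def by metis
  qed
  then show ?thesis by blast
qed

lemma lin_rec3_power:
  assumes "x ^ 3 = c2 * x ^ 2 + c1 * x + c0"
  shows "lin_rec3 c2 c1 c0 (\<lambda>n. x ^ n)"
  unfolding lin_rec3_def
proof
  fix n
  have "x ^ Suc (Suc (Suc n)) = x ^ 3 * x ^ n" by (simp add: power3_eq_cube algebra_simps)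
  also have "\<dots> = c2 * x ^ Suc (Suc n) + c1 * x ^ Suc n + c0 * x ^ n"
    by (simp add: assms algebra_simps power2_eq_square)
  finally show "x ^ Suc (Suc (Suc n)) = c2 * x ^ Suc (Suc n) + c1 * x ^ Suc n + c0 * x ^ n" .
qed

lemma lin_rec3_lincomb:
  assumes "lin_rec3 c2 c1 c0 f" "lin_rec3 c2 c1 c0 g" "lin_rec3 c2 c1 c0 h"
  shows "lin_rec3 c2 c1 c0 (\<lambda>n. a * f n + b * g n + c * h n)"
  using assms unfolding lin_rec3_def by (simp add: algebra_simps)

lemma lagrange_interpolation3:
  fixes x y z :: "'a::field"
  assumes "x \<noteq> y" "x \<noteq> z" "y \<noteq> z" "k < 3"
  shows "(D2 - (y + z) * D1 + y * z * D0) / ((x - y) * (x - z)) * x ^ k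
       + (D2 - (x + z) * D1 + x * z * D0) / ((y - x) * (y - z)) * y ^ k
       + (D2 - (x + y) * D1 + x * y * D0) / ((z - x) * (z - y)) * z ^ k = [D0, D1, D2] ! k"
proof -
  have "x - y \<noteq> 0" "x - z \<noteq> 0" "y - z \<noteq> 0" "y - x \<noteq> 0" "z - x \<noteq> 0" "z - y \<noteq> 0"
    using assms by auto
  then show ?thesis
    using assms(4) by (auto simp: divide_simps power2_eq_square less_Suc_eq numeral_3_eq_3)
      (simp_all add: algebra_simps)
qed

lemma lin_rec3_closed_form:
  fixes x y z :: "'a::field"
  assumes rec: "lin_rec3 c2 c1 c0 f"
    and roots: "x ^ 3 = c2 * x ^ 2 + c1 * x + c0" "y ^ 3 = c2 * y ^ 2 + c1 * y + c0"
      "z ^ 3 = c2 * z ^ 2 + c1 * z + c0"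
    and distinct: "x \<noteq> y" "x \<noteq> z" "y \<noteq> z"
  shows "f n = (f 2 - (y + z) * f 1 + y * z * f 0) / ((x - y) * (x - z)) * x ^ n
             + (f 2 - (x + z) * f 1 + x * z * f 0) / ((y - x) * (y - z)) * y ^ n
             + (f 2 - (x + y) * f 1 + x * y * f 0) / ((z - x) * (z - y)) * z ^ n"
    (is "f n = ?g n")
proof -
  have "lin_rec3 c2 c1 c0 ?g"
    using roots by (intro lin_rec3_lincomb lin_rec3_power)
  moreover have initial: "?g k = f k" if "k < 3" for k
    using lagrange_interpolation3[OF distinct that, of "f 2" "f 1" "f 0"] that
    by (auto simp: less_Suc_eq numeral_3_eq_3 numeral_2_eq_2)
  ultimately have "?g = f"
    using initial[of 0] initial[of 1] initial[of 2] by (intro lin_rec3_unique[OF _ rec]) simp_all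
  then show ?thesis by (rule fun_cong[OF sym])
qed

lemma cubic_distinct_roots_sum:
  fixes x y z :: "'a::field"
  assumes "x ^ 3 = c2 * x ^ 2 + c1 * x + c0" "y ^ 3 = c2 * y ^ 2 + c1 * y + c0"
    "z ^ 3 = c2 * z ^ 2 + c1 * z + c0"
    and "x \<noteq> y" "x \<noteq> z" "y \<noteq> z"
  shows "x + y + z = c2"
proof -
  have pair: "u ^ 2 + u * v + v ^ 2 = c2 * (u + v) + c1"
    if "u ^ 3 = c2 * u ^ 2 + c1 * u + c0" "v ^ 3 = c2 * v ^ 2 + c1 * v + c0" "u \<noteq> v" for u v
  proof -
    have "(u - v) * (u ^ 2 + u * v + v ^ 2 - c2 * (u + v) - c1) = u ^ 3 - v ^ 3 - c2 * (u ^ 2 - v ^ 2) - c1 * (u - v)"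
      by (simp add: algebra_simps power2_eq_square power3_eq_cube)
    also have "\<dots> = 0" using that(1,2) by (simp add: algebra_simps)
    finally show ?thesis using that(3) by (simp add: eq_diff_eq diff_diff_eq)
  qed
  have "(y - z) * (x + y + z - c2)
      = (x ^ 2 + x * y + y ^ 2 - (c2 * (x + y) + c1)) - (x ^ 2 + x * z + z ^ 2 - (c2 * (x + z) + c1))"
    by (simp add: algebra_simps power2_eq_square)
  also have "\<dots> = 0"
    using pair[OF assms(1,2,4)] pair[OF assms(1,3,5)] by simp
  finally have "(y - z) * (x + y + z - c2) = 0" .
  then show ?thesis using assms(6) by simp
qed

lemma dominant_root_at_bot:
  fixes L M N a b c :: real
  assumes "a < 0" "1 < L" "\<bar>M\<bar> < L" "\<bar>N\<bar> < L"
  shows "filterlim (\<lambda>n. a * L ^ n + b * M ^ n + c * N ^ n) at_bot sequentially"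
proof -
  have "(\<lambda>n. a + b * (M / L) ^ n + c * (N / L) ^ n) \<longlonglongrightarrow> a + b * 0 + c * 0"
    using assms by (intro tendsto_intros) (auto simp: abs_div)
  moreover have "filterlim (\<lambda>n. norm (L ^ n)) at_top sequentially"
    using assms(2) by (intro filterlim_at_infinity_imp_norm_at_top filterlim_realpow_sequentially_gt1) simp
  then have "filterlim (\<lambda>n. L ^ n) at_top sequentially"
    using assms(2) by (simp add: abs_of_pos)
  ultimately have "filterlim (\<lambda>n. (a + b * (M / L) ^ n + c * (N / L) ^ n) * L ^ n) at_bot sequentially"
    using assms(1) by (intro filterlim_tendsto_neg_mult_at_bot) auto
  moreover have "(a + b * (M / L) ^ n + c * (N / L) ^ n) * L ^ n = a * L ^ n + b * M ^ n + c * N ^ n" for n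
    using assms(2) by (simp add: algebra_simps power_divide)
  ultimately show ?thesis by simp
qed

lemma qpoly_root_reciprocal:
  assumes "qpoly r \<theta> x = 0"
  shows "(1 / x) ^ 3 = (r - \<theta>) * (1 / x) ^ 2 + (2 * \<theta> - r) * (1 / x) + (- \<theta>)"
proof -
  have "x \<noteq> 0" using assms by (auto simp: qpoly_def)
  then have "(1 / x) ^ 3 - ((r - \<theta>) * (1 / x) ^ 2 + (2 * \<theta> - r) * (1 / x) + (- \<theta>)) = qpoly r \<theta> x / x ^ 3"
    by (simp add: qpoly_def field_simps power2_eq_square power3_eq_cube)
  then show ?thesis using assms by simp
qed

lemma useq_diff_lin_rec3:
  "lin_rec3 (r - \<theta>) (2 * \<theta> - r) (- \<theta>) (\<lambda>n. useq r \<theta> \<delta> (Suc n) - useq r \<theta> \<delta> n)"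
  unfolding lin_rec3_def by (simp add: algebra_simps)

theorem mainTheorem8:
  fixes r \<theta> \<delta> \<alpha> \<beta> \<gamma> :: real
  assumes "4.999 \<le> r" "r \<le> 5" "1 \<le> \<theta>" "\<theta> \<le> 2.2"
    and "qpoly r \<theta> \<alpha> = 0" "qpoly r \<theta> \<beta> = 0" "qpoly r \<theta> \<gamma> = 0"
    and "\<alpha> < -1" "0 < \<gamma>" "\<gamma> < \<beta>" "\<beta> < 1"
    and "\<theta> + \<delta> < 1 / (1 - \<gamma>)"
  shows "filterlim (\<lambda>n. useq r \<theta> \<delta> (Suc n) - useq r \<theta> \<delta> n) at_bot sequentially"
proof -
  define d where "d n = useq r \<theta> \<delta> (Suc n) - useq r \<theta> \<delta> n" for n
  define L M N where "L = 1 / \<gamma>" and "M = 1 / \<beta>" and "N = 1 / \<alpha>"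
  note roots = qpoly_root_reciprocal[OF assms(7), folded L_def]
    qpoly_root_reciprocal[OF assms(6), folded M_def] qpoly_root_reciprocal[OF assms(5), folded N_def]
  have order: "1 < M" "M < L" "-1 < N" "N < 0"
    using assms(8-11) unfolding L_def M_def N_def by (simp_all add: frac_less2 field_simps)
  then have distinct: "L \<noteq> M" "L \<noteq> N" "M \<noteq> N" by auto
  have "d 2 - (M + N) * d 1 + M * N * d 0 = (L - 1) * (\<theta> + \<delta>) - L"
  proof -
    have "r = L + M + N + \<theta>" using cubic_distinct_roots_sum[OF roots distinct] by simp
    then show ?thesis by (simp add: d_def numeral_2_eq_2 algebra_simps)
  qed
  also have "\<dots> < 0"
  proof -
    have "1 / (1 - \<gamma>) = L / (L - 1)"
      using assms(9-11) unfolding L_def by (simp add: field_simps)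
    then show ?thesis using assms(12) order(1,2) by (simp add: less_divide_eq algebra_simps)
  qed
  finally have "(d 2 - (M + N) * d 1 + M * N * d 0) / ((L - M) * (L - N)) < 0"
    using order by (simp add: divide_neg_pos)
  then have "filterlim (\<lambda>n. (d 2 - (M + N) * d 1 + M * N * d 0) / ((L - M) * (L - N)) * L ^ n
      + (d 2 - (L + N) * d 1 + L * N * d 0) / ((M - L) * (M - N)) * M ^ n
      + (d 2 - (L + M) * d 1 + L * M * d 0) / ((N - L) * (N - M)) * N ^ n) at_bot sequentially"
    using order by (intro dominant_root_at_bot) auto
  then show ?thesis
    using lin_rec3_closed_form[OF useq_diff_lin_rec3[folded d_def] roots distinct]
    by (simp add: d_def)
qed

end
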